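(* The operators $\partial_{\underline z}$, $\partial_{\underline z}^\dagger$, $\partial_{\underline z}^J$ and $\partial_{\underline z}^{\dagger J}$ are invariant under the action of the symplectic group $\mathrm{Sp}(p)\cong\mathrm{Spin}_{\mathbb Q}(4p)$, i.e. each of them commutes with $L(s)$ for every $s\in\mathrm{Spin}_{\mathbb Q}(4p)$.
   Context: Coordinates on $\mathbb{R}^{4p}$: $(X_1,\dots,X_{4p})=(x_1,y_1,\dots,x_{2p},y_{2p})$, $\underline X=\sum_\alpha e_\alpha X_\alpha$, $\partial_{z_k}=\tfrac12(\partial_{x_k}-i\partial_{y_k})$, $\partial_{\bar z_k}=\tfrac12(\partial_{x_k}+i\partial_{y_k})$. $\mathbb{C}_{4p}$ is the complex Clifford algebra generated by $e_1,\dots,e_{4p}$ with $e_\alpha e_\beta+e_\beta e_\alpha=-2\delta_{\alpha\beta}$. Witt basis: $\mathfrak f_k=\tfrac12(-e_{2k-1}+ie_{2k})$, $\mathfrak f_k^\dagger=\tfrac12(e_{2k-1}+ie_{2k})$, $k=1,\dots,2p$. $I=\prod_k\mathfrak f_k\mathfrak f_k^\dagger$, spinor space $\mathbb S=\mathbb C_{4p}I$. Operators on $\mathbb S$-valued functions (left multiplication): $\partial_{\underline z}=\sum_{k}\mathfrak f_k^\dagger\partial_{z_k}$, $\partial_{\underline z}^\dagger=\sum_{k}\mathfrak f_k\partial_{\bar z_k}$, $\partial_{\underline z}^J=\sum_{j=1}^p(\mathfrak f_{2j-1}\partial_{z_{2j}}-\mathfrak f_{2j}\partial_{z_{2j-1}})$,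 $\partial_{\underline z}^{\dagger J}=\sum_{j=1}^p(\mathfrak f^\dagger_{2j-1}\partial_{\bar z_{2j}}-\mathfrak f^\dagger_{2j}\partial_{\bar z_{2j-1}})$. $\mathrm{Spin}_{\mathbb Q}(4p)$ is the subgroup of $\mathrm{Spin}(4p)$ of elements commuting with both $s_{\mathbb I}=\prod_{j=1}^{2p}\tfrac{\sqrt2}{2}(1+e_{2j-1}e_{2j})$ and $s_{\mathbb J}=\prod_{j=1}^p\tfrac12(1+e_{4j-3}e_{4j-1})(1-e_{4j-2}e_{4j})$; it doubly covers the subgroup of $\mathrm{SO}(4p)$ commuting with the complex structures $\mathbb I,\mathbb J$ (where $\mathbb{I}(e_{2k-1})=e_{2k}$, $\mathbb{I}(e_{2k})=-e_{2k-1}$, $\mathbb{J}(e_{4j-3})=e_{4j-1}$, $\mathbb{J}(e_{4j-2})=-e_{4j}$, $\mathbb{J}(e_{4j-1})=-e_{4j-3}$, $\mathbb{J}(e_{4j})=e_{4j-2}$), which is isomorphic to $\mathrm{Sp}(p)$. The $L$-action of $s\in\mathrm{Spin}(4p)$ on an $\mathbb S$-valued function $F$ is $L(s)[F](\underline X)=s\,F(s^{-1}\underline Xs)$. *)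

theory Defs
  imports "HOL-Analysis.Analysis"
begin

text \<open>Complex Clifford algebra on generators indexed by a finite linearly ordered type 'n
  (with CARD('n) = 4p). An element is given by its coefficients on the basis blades
  e_A (A a subset of 'n, factors in increasing order), so the algebra is the
  finite-dimensional normed space complex ^ ('n set).\<close>

type_synonym 'n cl = "complex ^ ('n set)"

definition cl_blade :: "'n::finite set \<Rightarrow> 'n cl" where
  "cl_blade A = (\<chi> B. if B = A then 1 else 0)"

text \<open>Sign of e_A e_B = sign * e_(A symdiff B), using e_i e_j = - e_j e_i (i \<noteq> j), e_i^2 = -1.\<close>
definition cl_sign :: "'n::{finite,linorder} set \<Rightarrow> 'n set \<Rightarrow> complex" where
  "cl_sign A B = (-1) ^ (card {(a,b). a \<in> A \<and> b \<in> B \<and> b < a} + card (A \<inter> B))"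

definition cl_mul :: "'n::{finite,linorder} cl \<Rightarrow> 'n cl \<Rightarrow> 'n cl" where
  "cl_mul x y = (\<chi> C. \<Sum>A\<in>UNIV. \<Sum>B\<in>UNIV.
       if (A - B) \<union> (B - A) = C then cl_sign A B * (x $ A) * (y $ B) else 0)"

definition cl_one :: "'n::finite cl" where
  "cl_one = cl_blade {}"

definition cl_prod :: "'n::{finite,linorder} cl list \<Rightarrow> 'n cl" where
  "cl_prod xs = foldr cl_mul xs cl_one"

definition cl_inv :: "'n::{finite,linorder} cl \<Rightarrow> 'n cl" where
  "cl_inv s = (THE t. cl_mul s t = cl_one \<and> cl_mul t s = cl_one)"

text \<open>Coordinates: X_alpha (alpha = 1..4p) is the component of X at the alpha-th element of 'n.\<close>
definition ix :: "nat \<Rightarrow> 'n::{finite,linorder}" where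
  "ix \<alpha> = sorted_list_of_set (UNIV :: 'n set) ! (\<alpha> - 1)"

definition cl_gen :: "nat \<Rightarrow> 'n::{finite,linorder} cl" where
  "cl_gen \<alpha> = cl_blade {ix \<alpha>}"

definition cl_vec :: "(real, 'n) vec \<Rightarrow> 'n::finite cl" where
  "cl_vec X = (\<Sum>i\<in>UNIV. complex_of_real (X $ i) *s cl_blade {i})"

definition cl_unvec :: "'n::finite cl \<Rightarrow> (real, 'n) vec" where
  "cl_unvec x = (\<chi> i. Re (x $ {i}))"

definition witt_f :: "nat \<Rightarrow> 'n::{finite,linorder} cl" where
  "witt_f k = (1/2 :: complex) *s (- cl_gen (2*k-1) + \<i> *s cl_gen (2*k))"

definition witt_fd :: "nat \<Rightarrow> 'n::{finite,linorder} cl" where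
  "witt_fd k = (1/2 :: complex) *s (cl_gen (2*k-1) + \<i> *s cl_gen (2*k))"

definition prim_idem :: "nat \<Rightarrow> 'n::{finite,linorder} cl" where
  "prim_idem p = cl_prod (map (\<lambda>k. cl_mul (witt_f k) (witt_fd k)) [1..<2*p+1])"

definition spinor_space :: "nat \<Rightarrow> 'n::{finite,linorder} cl set" where
  "spinor_space p = {cl_mul a (prim_idem p) | a. True}"

definition spin_group :: "'n::{finite,linorder} cl set" where
  "spin_group = {cl_prod (map cl_vec ws) | ws :: ((real, 'n::{finite,linorder}) vec) list.
                   even (length ws) \<and> (\<forall>w \<in> set ws. norm w = 1)}"

definition s_I :: "nat \<Rightarrow> 'n::{finite,linorder} cl" where
  "s_I p = cl_prod (map (\<lambda>j. complex_of_real (sqrt 2 / 2) *s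
              (cl_one + cl_mul (cl_gen (2*j-1)) (cl_gen (2*j)))) [1..<2*p+1])"

definition s_J :: "nat \<Rightarrow> 'n::{finite,linorder} cl" where
  "s_J p = cl_prod (map (\<lambda>j. cl_mul ((1/2 :: complex) *s (cl_one + cl_mul (cl_gen (4*j-3)) (cl_gen (4*j-1))))
                                      (cl_one - cl_mul (cl_gen (4*j-2)) (cl_gen (4*j)))) [1..<p+1])"

definition spinQ :: "nat \<Rightarrow> 'n::{finite,linorder} cl set" where
  "spinQ p = {s \<in> spin_group. cl_mul s (s_I p) = cl_mul (s_I p) s \<and> cl_mul s (s_J p) = cl_mul (s_J p) s}"

definition Lact :: "'n cl \<Rightarrow> ((real, 'n) vec \<Rightarrow> 'n::{finite,linorder} cl) \<Rightarrow> (real, 'n) vec \<Rightarrow> 'n cl" where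
  "Lact s F X = cl_mul s (F (cl_unvec (cl_mul (cl_mul (cl_inv s) (cl_vec X)) s)))"

definition pd :: "nat \<Rightarrow> ((real, 'n) vec \<Rightarrow> 'n::{finite,linorder} cl) \<Rightarrow> (real, 'n) vec \<Rightarrow> 'n cl" where
  "pd \<alpha> F X = frechet_derivative F (at X) (axis (ix \<alpha>) 1)"

definition dz :: "nat \<Rightarrow> ((real, 'n) vec \<Rightarrow> 'n::{finite,linorder} cl) \<Rightarrow> (real, 'n) vec \<Rightarrow> 'n cl" where
  "dz k F X = (1/2 :: complex) *s (pd (2*k-1) F X - \<i> *s pd (2*k) F X)"

definition dzb :: "nat \<Rightarrow> ((real, 'n) vec \<Rightarrow> 'n::{finite,linorder} cl) \<Rightarrow> (real, 'n) vec \<Rightarrow> 'n cl" where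
  "dzb k F X = (1/2 :: complex) *s (pd (2*k-1) F X + \<i> *s pd (2*k) F X)"

definition Dz :: "nat \<Rightarrow> ((real, 'n) vec \<Rightarrow> 'n::{finite,linorder} cl) \<Rightarrow> (real, 'n) vec \<Rightarrow> 'n cl" where
  "Dz p F X = (\<Sum>k=1..2*p. cl_mul (witt_fd k) (dz k F X))"

definition Dz_dag :: "nat \<Rightarrow> ((real, 'n) vec \<Rightarrow> 'n::{finite,linorder} cl) \<Rightarrow> (real, 'n) vec \<Rightarrow> 'n cl" where
  "Dz_dag p F X = (\<Sum>k=1..2*p. cl_mul (witt_f k) (dzb k F X))"

definition Dz_J :: "nat \<Rightarrow> ((real, 'n) vec \<Rightarrow> 'n::{finite,linorder} cl) \<Rightarrow> (real, 'n) vec \<Rightarrow> 'n cl" where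
  "Dz_J p F X = (\<Sum>j=1..p. cl_mul (witt_f (2*j-1)) (dz (2*j) F X) - cl_mul (witt_f (2*j)) (dz (2*j-1) F X))"

definition Dz_dag_J :: "nat \<Rightarrow> ((real, 'n) vec \<Rightarrow> 'n::{finite,linorder} cl) \<Rightarrow> (real, 'n) vec \<Rightarrow> 'n cl" where
  "Dz_dag_J p F X = (\<Sum>j=1..p. cl_mul (witt_fd (2*j-1)) (dzb (2*j) F X) - cl_mul (witt_fd (2*j)) (dzb (2*j-1) F X))"

end

theory Submission
  imports Defs
begin

text \<open>
  Each of the four operators has the form \<open>\<Sum>\<^sub>m C(e\<^sub>m) \<partial>\<^sub>m\<close>, where \<open>C\<close> is a complex
  combination of the identity and of conjugation by \<open>s_I\<close>, \<open>s_J\<close> and \<open>s_I s_J\<close>; on vectors these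
  conjugations act as the complex structures \<open>\<bbbI>\<close>, \<open>\<bbbJ>\<close> and \<open>\<bbbI>\<bbbJ>\<close>. By the chain rule,
  \<open>\<partial>\<^sub>m (L(s)F) = s \<Sum>\<^sub>b R\<^sub>m\<^sub>b (\<partial>\<^sub>b F)(s\<^sup>-\<^sup>1 X s)\<close>, where \<open>R\<close> is the matrix of
  \<open>x \<mapsto> s\<^sup>-\<^sup>1 x s\<close>. This matrix is the transpose of that of \<open>x \<mapsto> s x s\<^sup>-\<^sup>1\<close>, so
  \<open>\<Sum>\<^sub>m R\<^sub>m\<^sub>b e\<^sub>m = s e\<^sub>b s\<^sup>-\<^sup>1\<close>, and by linearity the operator applied to \<open>L(s)F\<close>
  becomes \<open>\<Sum>\<^sub>b C(s e\<^sub>b s\<^sup>-\<^sup>1) s (\<partial>\<^sub>b F)(s\<^sup>-\<^sup>1 X s)\<close>. Elements of \<open>Spin\<^sub>\<bbbQ>(4p)\<close>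
  commute with \<open>s_I\<close> and \<open>s_J\<close>, hence \<open>C(s e\<^sub>b s\<^sup>-\<^sup>1) s = s C(e\<^sub>b)\<close>, which is the invariance.
\<close>

notation cl_mul (infixl "\<star>" 70)

section \<open>The Clifford algebra\<close>

lemma cl_mul_component:
  "(x \<star> y) $ C = (\<Sum>A\<in>UNIV. cl_sign A (sym_diff A C) * x $ A * y $ (sym_diff A C))"
proof -
  have "(\<Sum>B\<in>UNIV. if sym_diff A B = C then cl_sign A B * x $ A * y $ B else 0)
        = cl_sign A (sym_diff A C) * x $ A * y $ (sym_diff A C)" for A
  proof -
    have "(sym_diff A B = C) = (B = sym_diff A C)" for B by blast
    then show ?thesis by (simp add: sum.delta)
  qed
  then show ?thesis by (simp add: cl_mul_def)
qed

lemma cl_mul_add_left: "(x + y) \<star> z = x \<star> z + y \<star> z"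
  by (simp add: vec_eq_iff cl_mul_component sum.distrib algebra_simps)
lemma cl_mul_add_right: "z \<star> (x + y) = z \<star> x + z \<star> y"
  by (simp add: vec_eq_iff cl_mul_component sum.distrib algebra_simps)
lemma cl_mul_smult_left: "(c *s x) \<star> z = c *s (x \<star> z)"
  by (simp add: vec_eq_iff cl_mul_component sum_distrib_left algebra_simps)
lemma cl_mul_smult_right: "z \<star> (c *s x) = c *s (z \<star> x)"
  by (simp add: vec_eq_iff cl_mul_component sum_distrib_left algebra_simps)
lemma cl_mul_zero_left [simp]: "0 \<star> z = 0"
  by (simp add: vec_eq_iff cl_mul_component)
lemma cl_mul_zero_right [simp]: "z \<star> 0 = 0"
  by (simp add: vec_eq_iff cl_mul_component)
lemma cl_mul_minus_left: "(- x) \<star> z = - (x \<star> z)"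
  by (simp add: vec_eq_iff cl_mul_component sum_negf)
lemma cl_mul_minus_right: "z \<star> (- x) = - (z \<star> x)"
  by (simp add: vec_eq_iff cl_mul_component sum_negf)
lemma cl_mul_diff_left: "(x - y) \<star> z = x \<star> z - y \<star> z"
  by (simp add: vec_eq_iff cl_mul_component sum_subtractf algebra_simps)
lemma cl_mul_diff_right: "z \<star> (x - y) = z \<star> x - z \<star> y"
  by (simp add: vec_eq_iff cl_mul_component sum_subtractf algebra_simps)
lemma cl_mul_sum_left: "(\<Sum>i\<in>I. f i) \<star> z = (\<Sum>i\<in>I. f i \<star> z)"
  by (induction I rule: infinite_finite_induct) (auto simp: cl_mul_add_left)
lemma cl_mul_sum_right: "z \<star> (\<Sum>i\<in>I. f i) = (\<Sum>i\<in>I. z \<star> f i)"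
  by (induction I rule: infinite_finite_induct) (auto simp: cl_mul_add_right)

lemmas cl_mul_linear_simps = cl_mul_add_left cl_mul_add_right cl_mul_diff_left cl_mul_diff_right
  cl_mul_smult_left cl_mul_smult_right cl_mul_minus_left cl_mul_minus_right

lemma scaleR_cl_eq_smult: "r *\<^sub>R (x :: 'n::finite cl) = complex_of_real r *s x"
  unfolding vec_eq_iff vector_scaleR_component vector_smult_component by (simp add: scaleR_conv_of_real)

lemma cl_mul_scaleR_left: "(r *\<^sub>R x) \<star> z = r *\<^sub>R (x \<star> z)"
  by (simp add: scaleR_cl_eq_smult cl_mul_smult_left)
lemma cl_mul_scaleR_right: "z \<star> (r *\<^sub>R x) = r *\<^sub>R (z \<star> x)"
  by (simp add: scaleR_cl_eq_smult cl_mul_smult_right)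

lemma linear_cl_mul_left: "linear (\<lambda>y. s \<star> y)"
  by (rule linearI) (simp_all add: cl_mul_add_right cl_mul_scaleR_right)

lemma smult_sum: "(c::complex) *s (\<Sum>i\<in>I. f i) = (\<Sum>i\<in>I. c *s (f i :: 'n::finite cl))"
  by (induction I rule: infinite_finite_induct) (simp_all add: vec_eq_iff algebra_simps)

lemma cl_blade_component: "cl_blade A $ B = (if B = A then 1 else 0)"
  by (simp add: cl_blade_def)

lemma cl_blade_expansion: "x = (\<Sum>A\<in>UNIV. x $ A *s cl_blade (A::'n::finite set))"
  by (simp add: vec_eq_iff cl_blade_def if_distrib sum.delta cong: if_cong)

lemma cl_blade_mul: "cl_blade A \<star> cl_blade B = cl_sign A B *s cl_blade (sym_diff A B)"
proof -
  have "(cl_blade A \<star> cl_blade B) $ C = (cl_sign A B *s cl_blade (sym_diff A B)) $ C" for C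
  proof -
    have "(cl_blade A \<star> cl_blade B) $ C
        = (\<Sum>D\<in>UNIV. if D = A then cl_sign A (sym_diff A C) * cl_blade B $ sym_diff A C else 0)"
      unfolding cl_mul_component by (rule sum.cong) (auto simp: cl_blade_component)
    then have "(cl_blade A \<star> cl_blade B) $ C = cl_sign A (sym_diff A C) * cl_blade B $ sym_diff A C"
      by simp
    moreover have "(sym_diff A C = B) = (C = sym_diff A B)" by blast
    ultimately show ?thesis by (auto simp: cl_blade_component)
  qed
  then show ?thesis by (simp add: vec_eq_iff)
qed

text \<open>The sign of a blade product is a product of parities, hence a 2-cocycle on the
  group of subsets under symmetric difference; this is what makes the product associative.\<close>

definition parity :: "'a set \<Rightarrow> complex" where
  "parity S = (-1) ^ card S"

definition inversions :: "'a::linorder set \<Rightarrow> 'a set \<Rightarrow> ('a \<times> 'a) set" where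
  "inversions A B = {(a,b). a \<in> A \<and> b \<in> B \<and> b < a}"

lemma parity_sym_diff:
  assumes "finite X" "finite Y"
  shows "parity (sym_diff X Y) = parity X * parity Y"
proof -
  have "card X = card (X \<inter> Y) + card (X - Y)" "card Y = card (X \<inter> Y) + card (Y - X)"
    using assms card_Int_Diff by (metis Int_commute)+
  moreover have "card (sym_diff X Y) = card (X - Y) + card (Y - X)"
    using assms by (subst card_Un_disjoint) auto
  ultimately have "card X + card Y = card (sym_diff X Y) + 2 * card (X \<inter> Y)" by simp
  then have "(-1::complex) ^ (card X + card Y) = (-1) ^ (card (sym_diff X Y) + 2 * card (X \<inter> Y))"
    by simp
  then show ?thesis by (simp add: parity_def power_add power_mult)
qed

lemma cl_sign_eq_parity: "cl_sign A B = parity (inversions A B) * parity (A \<inter> B)"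
  by (simp add: cl_sign_def parity_def inversions_def power_add)

lemma cl_sign_cocycle:
  fixes A B C :: "'n::{finite,linorder} set"
  shows "cl_sign A B * cl_sign (sym_diff A B) C = cl_sign A (sym_diff B C) * cl_sign B C"
proof -
  have "inversions (sym_diff A B) C = sym_diff (inversions A C) (inversions B C)"
    "inversions A (sym_diff B C) = sym_diff (inversions A B) (inversions A C)"
    "sym_diff A B \<inter> C = sym_diff (A \<inter> C) (B \<inter> C)"
    "A \<inter> sym_diff B C = sym_diff (A \<inter> B) (A \<inter> C)"
    by (auto simp: inversions_def)
  then show ?thesis
    by (simp add: cl_sign_eq_parity parity_sym_diff)
qed

lemma cl_blade_mul_assoc:
  "(cl_blade A \<star> cl_blade B) \<star> cl_blade C = cl_blade A \<star> (cl_blade B \<star> cl_blade (C::'n::{finite,linorder} set))"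
proof -
  have "sym_diff (sym_diff A B) C = sym_diff A (sym_diff B C)" by blast
  then show ?thesis
    by (simp add: cl_blade_mul cl_mul_smult_left cl_mul_smult_right cl_sign_cocycle mult.commute)
qed

lemma cl_mul_expand_left: "x \<star> z = (\<Sum>A\<in>UNIV. x $ A *s (cl_blade A \<star> z))"
  by (subst cl_blade_expansion[of x]) (simp only: cl_mul_sum_left cl_mul_smult_left)

lemma cl_mul_expand_right: "z \<star> x = (\<Sum>A\<in>UNIV. x $ A *s (z \<star> cl_blade A))"
  by (subst cl_blade_expansion[of x]) (simp only: cl_mul_sum_right cl_mul_smult_right)

lemma cl_mul_assoc: "(x \<star> y) \<star> z = x \<star> (y \<star> (z::'n::{finite,linorder} cl))"
proof -
  have blades: "(cl_blade A \<star> cl_blade B) \<star> z = cl_blade A \<star> (cl_blade B \<star> z)" for A B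
    by (simp only: cl_mul_expand_right[of _ z] cl_blade_mul_assoc cl_mul_sum_right cl_mul_smult_right)
  have "(cl_blade A \<star> y) \<star> z = cl_blade A \<star> (y \<star> z)" for A
    by (simp only: cl_mul_expand_right[of "cl_blade A" y] cl_mul_expand_left[of y z]
        cl_mul_sum_left cl_mul_sum_right cl_mul_smult_left cl_mul_smult_right blades)
  then show ?thesis
    by (simp only: cl_mul_expand_left[of x] cl_mul_sum_left cl_mul_smult_left)
qed

lemma cl_one_component: "cl_one $ A = (if A = {} then 1 else 0)"
  by (simp add: cl_one_def cl_blade_component)

lemma cl_one_mul [simp]: "cl_one \<star> x = (x::'n::{finite,linorder} cl)"
proof -
  have "cl_one \<star> cl_blade A = cl_blade A" for A :: "'n set"
    by (simp add: cl_one_def cl_blade_mul cl_sign_def)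
  then show ?thesis
    by (subst cl_mul_expand_right) (simp flip: cl_blade_expansion)
qed

lemma cl_mul_one [simp]: "x \<star> cl_one = (x::'n::{finite,linorder} cl)"
proof -
  have "cl_blade A \<star> cl_one = cl_blade A" for A :: "'n set"
    by (simp add: cl_one_def cl_blade_mul cl_sign_def)
  then show ?thesis
    by (subst cl_mul_expand_left) (simp flip: cl_blade_expansion)
qed

lemma cl_prod_Nil [simp]: "cl_prod [] = cl_one"
  by (simp add: cl_prod_def)

lemma cl_prod_Cons [simp]: "cl_prod (x # xs) = x \<star> cl_prod xs"
  by (simp add: cl_prod_def)

lemma cl_prod_append: "cl_prod (xs @ ys) = cl_prod xs \<star> (cl_prod ys :: 'n::{finite,linorder} cl)"
  by (induction xs) (simp_all add: cl_mul_assoc)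

section \<open>Vectors\<close>

definition is_cl_vector :: "'n::finite cl \<Rightarrow> bool" where
  "is_cl_vector x \<longleftrightarrow> (\<forall>A. card A \<noteq> 1 \<longrightarrow> x $ A = 0)"

definition cl_dot :: "'n::finite cl \<Rightarrow> 'n cl \<Rightarrow> complex" where
  "cl_dot x y = (\<Sum>i\<in>UNIV. x $ {i} * y $ {i})"

lemma cl_blade_singleton_sq: "cl_blade {i} \<star> cl_blade {i} = - (cl_one :: 'n::{finite,linorder} cl)"
proof -
  have "inversions {i} {i} = {}" by (auto simp: inversions_def)
  then have "cl_sign {i} {i} = -1" by (simp add: cl_sign_eq_parity parity_def)
  then show ?thesis by (simp add: cl_blade_mul cl_one_def vec_eq_iff)
qed

lemma cl_blade_singleton_anticommute:
  assumes "i \<noteq> j"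
  shows "cl_blade {i} \<star> cl_blade {j} = - (cl_blade {j} \<star> cl_blade {i} :: 'n::{finite,linorder} cl)"
proof -
  have "sym_diff {i} {j} = {i,j}" "sym_diff {j} {i} = {i,j}" using assms by auto
  moreover have "cl_sign {i} {j} = - cl_sign {j} {i}"
  proof (cases "j < i")
    case True
    then have "inversions {i} {j} = {(i,j)}" "inversions {j} {i} = {}"
      by (auto simp: inversions_def)
    then show ?thesis using assms by (simp add: cl_sign_eq_parity parity_def)
  next
    case False
    then have "inversions {i} {j} = {}" "inversions {j} {i} = {(j,i)}"
      using assms by (auto simp: inversions_def)
    then show ?thesis using assms by (simp add: cl_sign_eq_parity parity_def)
  qed
  ultimately show ?thesis by (simp add: cl_blade_mul vec_eq_iff)
qed

lemma is_cl_vector_expansion: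
  assumes "is_cl_vector x"
  shows "x = (\<Sum>i\<in>UNIV. x $ {i} *s cl_blade {i})"
proof -
  have "(\<Sum>i\<in>UNIV. if A = {i} then x $ {i} else 0) = x $ A" for A
  proof (cases "card A = 1")
    case True
    then obtain a where a: "A = {a}" by (rule card_1_singletonE)
    then have "(\<Sum>i\<in>UNIV. if A = {i} then x $ {i} else 0) = (\<Sum>i\<in>UNIV. if i = a then x $ {a} else 0)"
      by (intro sum.cong) auto
    then show ?thesis using a by simp
  next
    case False
    then have "A \<noteq> {i}" for i by auto
    then show ?thesis using False assms by (simp add: is_cl_vector_def)
  qed
  then show ?thesis
    by (simp add: vec_eq_iff cl_blade_component if_distrib cong: if_cong)
qed

lemma is_cl_vector_blade: "is_cl_vector (cl_blade {i})"
  by (simp add: is_cl_vector_def cl_blade_component)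

lemma is_cl_vector_diff: "is_cl_vector x \<Longrightarrow> is_cl_vector y \<Longrightarrow> is_cl_vector (x - y)"
  by (simp add: is_cl_vector_def)

lemma is_cl_vector_smult: "is_cl_vector x \<Longrightarrow> is_cl_vector (c *s x)"
  by (simp add: is_cl_vector_def)

lemma cl_vector_mul_expansion:
  assumes "is_cl_vector x" "is_cl_vector y"
  shows "x \<star> y = (\<Sum>i\<in>UNIV. \<Sum>j\<in>UNIV. (x $ {i} * y $ {j}) *s (cl_blade {i} \<star> cl_blade {j} :: 'n::{finite,linorder} cl))"
proof -
  have "x \<star> y = (\<Sum>i\<in>UNIV. x $ {i} *s cl_blade {i}) \<star> (\<Sum>j\<in>UNIV. y $ {j} *s cl_blade {j})"
    using is_cl_vector_expansion[OF assms(1)] is_cl_vector_expansion[OF assms(2)]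
    by (rule arg_cong2[where f = cl_mul])
  also have "\<dots> = (\<Sum>j\<in>UNIV. \<Sum>i\<in>UNIV. (x $ {i} * y $ {j}) *s (cl_blade {i} \<star> cl_blade {j}))"
    by (simp add: cl_mul_sum_left cl_mul_sum_right cl_mul_smult_left cl_mul_smult_right
        smult_sum vector_smult_assoc mult.commute)
  also have "\<dots> = (\<Sum>i\<in>UNIV. \<Sum>j\<in>UNIV. (x $ {i} * y $ {j}) *s (cl_blade {i} \<star> cl_blade {j}))"
    by (rule sum.swap)
  finally show ?thesis .
qed

lemma cl_vector_anticommute:
  assumes "is_cl_vector x" "is_cl_vector y"
  shows "x \<star> y + y \<star> x = (-2 * cl_dot x y) *s (cl_one :: 'n::{finite,linorder} cl)"
proof -
  have blades: "cl_blade {i} \<star> cl_blade {j} + cl_blade {j} \<star> cl_blade {i}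
      = (if i = j then -2 else 0) *s (cl_one :: 'n cl)" for i j
  proof (cases "i = j")
    case False
    then show ?thesis by (simp add: cl_blade_singleton_anticommute[OF False])
  qed (simp add: cl_blade_singleton_sq vec_eq_iff)
  have "y \<star> x = (\<Sum>j\<in>UNIV. \<Sum>i\<in>UNIV. (y $ {i} * x $ {j}) *s (cl_blade {i} \<star> cl_blade {j}))"
    by (subst cl_vector_mul_expansion[OF assms(2,1)]) (rule sum.swap)
  also have "\<dots> = (\<Sum>i\<in>UNIV. \<Sum>j\<in>UNIV. (x $ {i} * y $ {j}) *s (cl_blade {j} \<star> cl_blade {i}))"
    by (simp only: mult.commute)
  finally have "x \<star> y + y \<star> x = (\<Sum>i\<in>UNIV. \<Sum>j\<in>UNIV.
      (x $ {i} * y $ {j}) *s (cl_blade {i} \<star> cl_blade {j} + cl_blade {j} \<star> cl_blade {i}))"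
    by (simp only: cl_vector_mul_expansion[OF assms] sum.distrib[symmetric] vector_add_ldistrib)
  also have "\<dots> = (\<Sum>i\<in>UNIV. \<Sum>j\<in>UNIV. (if j = i then (-2 * (x $ {i} * y $ {i})) *s cl_one else 0))"
    by (intro sum.cong refl) (auto simp: blades vector_smult_assoc)
  also have "\<dots> = (-2 * cl_dot x y) *s cl_one"
    by (simp add: cl_dot_def sum_distrib_left vec_eq_iff sum_distrib_right)
  finally show ?thesis .
qed

lemma cl_vector_sq:
  assumes "is_cl_vector x"
  shows "x \<star> x = (- cl_dot x x) *s (cl_one :: 'n::{finite,linorder} cl)"
proof -
  have "(x \<star> x) $ A = (- cl_dot x x) * cl_one $ A" for A
  proof -
    have "(x \<star> x) $ A + (x \<star> x) $ A = (-2 * cl_dot x x) * cl_one $ A"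
      using arg_cong[OF cl_vector_anticommute[OF assms assms], of "\<lambda>v. v $ A"]
      by (simp only: vector_add_component vector_smult_component)
    then show ?thesis by algebra
  qed
  then show ?thesis by (simp add: vec_eq_iff)
qed

lemma cl_vector_reflection:
  assumes "is_cl_vector u" "is_cl_vector v"
  shows "is_cl_vector (u \<star> v \<star> (u::'n::{finite,linorder} cl))"
proof -
  have "v \<star> u = (-2 * cl_dot u v) *s cl_one - u \<star> v"
    using cl_vector_anticommute[OF assms] by (simp add: algebra_simps)
  then have "u \<star> v \<star> u = (-2 * cl_dot u v) *s u - (u \<star> u) \<star> v"
    by (simp add: cl_mul_assoc cl_mul_diff_right cl_mul_smult_right cl_mul_minus_right)
  also have "\<dots> = (-2 * cl_dot u v) *s u - (- cl_dot u u) *s v"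
    by (simp add: cl_vector_sq[OF assms(1)] cl_mul_smult_left cl_mul_minus_left)
  finally show ?thesis using assms by (simp add: is_cl_vector_diff is_cl_vector_smult)
qed

definition is_cl_real :: "'n::finite cl \<Rightarrow> bool" where
  "is_cl_real x \<longleftrightarrow> (\<forall>A. Im (x $ A) = 0)"

lemma is_cl_real_mul: "is_cl_real x \<Longrightarrow> is_cl_real y \<Longrightarrow> is_cl_real (x \<star> y)"
  by (simp add: is_cl_real_def cl_mul_component Im_sum cl_sign_def)

lemma is_cl_real_prod: "(\<And>x. x \<in> set xs \<Longrightarrow> is_cl_real x) \<Longrightarrow> is_cl_real (cl_prod xs)"
proof (induction xs)
  case Nil
  then show ?case by (simp add: is_cl_real_def cl_one_component)
next
  case (Cons x xs)
  then show ?case by (simp add: is_cl_real_mul)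
qed

lemma cl_vec_component:
  "cl_vec X $ A = (if card A = 1 then complex_of_real (X $ (THE i. A = {i})) else 0)"
proof (cases "card A = 1")
  case True
  then obtain a where "A = {a}" by (rule card_1_singletonE)
  then show ?thesis by (simp add: cl_vec_def cl_blade_component if_distrib sum.delta cong: if_cong)
next
  case False
  then have "A \<noteq> {i}" for i by auto
  then show ?thesis using False by (simp add: cl_vec_def cl_blade_component)
qed

lemma cl_vec_singleton_component [simp]: "cl_vec X $ {i} = complex_of_real (X $ i)"
  by (simp add: cl_vec_component)

lemma is_cl_vector_cl_vec: "is_cl_vector (cl_vec X)"
  by (simp add: is_cl_vector_def cl_vec_component)

lemma is_cl_real_cl_vec: "is_cl_real (cl_vec X)"
  by (simp add: is_cl_real_def cl_vec_component)

lemma cl_vec_sq: "cl_vec X \<star> cl_vec X = (- complex_of_real ((norm X)\<^sup>2)) *s (cl_one :: 'n::{finite,linorder} cl)"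
proof -
  have "cl_dot (cl_vec X) (cl_vec X) = complex_of_real ((norm X)\<^sup>2)"
    by (simp add: cl_dot_def power2_norm_eq_inner inner_vec_def)
  then show ?thesis by (simp add: cl_vector_sq[OF is_cl_vector_cl_vec])
qed

section \<open>Units and conjugation\<close>

definition cl_unit :: "'n::{finite,linorder} cl \<Rightarrow> bool" where
  "cl_unit u \<longleftrightarrow> (\<exists>t. u \<star> t = cl_one \<and> t \<star> u = cl_one)"

lemma cl_inv_unique:
  assumes "s \<star> t = cl_one" "t \<star> s = (cl_one :: 'n::{finite,linorder} cl)"
  shows "cl_inv s = t"
  unfolding cl_inv_def
proof (rule the_equality)
  show "s \<star> t = cl_one \<and> t \<star> s = cl_one" using assms by simp
  fix t' assume "s \<star> t' = cl_one \<and> t' \<star> s = cl_one"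
  then have "t' = t' \<star> (s \<star> t)" "t' \<star> s = cl_one" using assms by auto
  then show "t' = t" by (simp add: cl_mul_assoc[symmetric])
qed

lemma cl_unit_inv:
  assumes "cl_unit u"
  shows "u \<star> cl_inv u = cl_one" "cl_inv u \<star> u = cl_one"
  using assms cl_inv_unique unfolding cl_unit_def by metis+

lemma cl_unit_inv_cancel:
  assumes "cl_unit u"
  shows "u \<star> (cl_inv u \<star> z) = z" "cl_inv u \<star> (u \<star> z) = z"
  by (simp_all add: cl_mul_assoc[symmetric] cl_unit_inv[OF assms])

lemma cl_unitI: "u \<star> t = cl_one \<Longrightarrow> t \<star> u = cl_one \<Longrightarrow> cl_unit u"
  unfolding cl_unit_def by blast

lemma cl_unit_mul:
  assumes "cl_unit u" "cl_unit v"
  shows "cl_unit (u \<star> v)"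
proof (rule cl_unitI)
  show "u \<star> v \<star> (cl_inv v \<star> cl_inv u) = cl_one" "cl_inv v \<star> cl_inv u \<star> (u \<star> v) = cl_one"
    by (simp_all add: cl_mul_assoc cl_unit_inv_cancel assms cl_unit_inv)
qed

lemma cl_inv_mul:
  assumes "cl_unit u" "cl_unit v"
  shows "cl_inv (u \<star> v) = cl_inv v \<star> cl_inv u"
  by (intro cl_inv_unique) (simp_all add: cl_mul_assoc cl_unit_inv_cancel assms cl_unit_inv)

lemma cl_unit_smult:
  assumes "c \<noteq> 0" "cl_unit u"
  shows "cl_unit (c *s u)"
  using assms cl_unit_inv[OF assms(2)]
  by (intro cl_unitI[where t = "inverse c *s cl_inv u"]) (simp_all add: cl_mul_smult_left cl_mul_smult_right)

lemma cl_unit_prod: "(\<And>x. x \<in> set xs \<Longrightarrow> cl_unit x) \<Longrightarrow> cl_unit (cl_prod xs)"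
proof (induction xs)
  case Nil
  then show ?case by (simp add: cl_unit_def)
next
  case (Cons x xs)
  then show ?case by (simp add: cl_unit_mul)
qed

lemma cl_unit_one_plus:
  assumes "w \<star> w = - cl_one"
  shows "cl_unit (cl_one + w)"
proof (rule cl_unitI)
  show "(cl_one + w) \<star> ((1/2) *s (cl_one - w)) = cl_one" "(1/2) *s (cl_one - w) \<star> (cl_one + w) = cl_one"
    using assms by (simp_all add: cl_mul_linear_simps vec_eq_iff)
qed

definition cl_conj :: "'n::{finite,linorder} cl \<Rightarrow> 'n cl \<Rightarrow> 'n cl" where
  "cl_conj u x = u \<star> x \<star> cl_inv u"

lemma cl_conj_mul:
  assumes "cl_unit u" "cl_unit v"
  shows "cl_conj (u \<star> v) x = cl_conj u (cl_conj v x)"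
  by (simp add: cl_conj_def cl_inv_mul[OF assms] cl_mul_assoc)

lemma cl_conj_commute:
  assumes "cl_unit u" "cl_unit s" "u \<star> s = s \<star> u"
  shows "cl_conj u (cl_conj s x) = cl_conj s (cl_conj u x)"
  by (metis assms cl_conj_mul)

lemma cl_conj_add: "cl_conj u (x + y) = cl_conj u x + cl_conj u y"
  by (simp add: cl_conj_def cl_mul_add_left cl_mul_add_right)

lemma cl_conj_smult: "cl_conj u (c *s x) = c *s cl_conj u x"
  by (simp add: cl_conj_def cl_mul_smult_left cl_mul_smult_right)

lemma cl_conj_minus: "cl_conj u (- x) = - cl_conj u x"
  by (simp add: cl_conj_def cl_mul_minus_left cl_mul_minus_right)

definition cl_intertwines :: "'n::{finite,linorder} cl \<Rightarrow> 'n cl \<Rightarrow> 'n cl \<Rightarrow> bool" where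
  "cl_intertwines u x y \<longleftrightarrow> u \<star> x = y \<star> u"

lemma cl_conj_eqI:
  assumes "cl_unit u" "cl_intertwines u x y"
  shows "cl_conj u x = y"
  using assms by (simp add: cl_intertwines_def cl_conj_def cl_unit_inv cl_mul_assoc)

lemma cl_intertwines_mul:
  "cl_intertwines u x y \<Longrightarrow> cl_intertwines v y z \<Longrightarrow> cl_intertwines (v \<star> u) x z"
  by (simp add: cl_intertwines_def cl_mul_assoc) (simp add: cl_mul_assoc[symmetric])

lemma cl_intertwines_smult: "cl_intertwines u x y \<Longrightarrow> cl_intertwines (c *s u) x y"
  by (simp add: cl_intertwines_def cl_mul_smult_left cl_mul_smult_right)

lemma cl_intertwines_uminus: "cl_intertwines u x y \<Longrightarrow> cl_intertwines u (-x) (-y)"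
  by (simp add: cl_intertwines_def cl_mul_minus_left cl_mul_minus_right)

lemma cl_intertwines_prod_commute:
  "(\<And>u. u \<in> set us \<Longrightarrow> cl_intertwines u x x) \<Longrightarrow> cl_intertwines (cl_prod us) x x"
proof (induction us)
  case Nil
  then show ?case by (simp add: cl_intertwines_def)
next
  case (Cons u us)
  then show ?case by (simp add: cl_intertwines_mul)
qed

lemma cl_intertwines_prod_factor:
  assumes "i \<le> k" "k < j"
    and "\<And>m. i \<le> m \<Longrightarrow> m < j \<Longrightarrow> m \<noteq> k \<Longrightarrow> cl_intertwines (f m) x x \<and> cl_intertwines (f m) y y"
    and "cl_intertwines (f k) x y"
  shows "cl_intertwines (cl_prod (map f [i..<j])) x y"
proof -
  have "[i..<j] = [i..<k] @ [k..<j]"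
    using upt_add_eq_append[of i k "j - k"] assms(1,2) by simp
  also have "[k..<j] = k # [Suc k..<j]"
    using assms(2) by (rule upt_conv_Cons)
  finally have "[i..<j] = [i..<k] @ k # [Suc k..<j]" .
  moreover have "cl_intertwines (f k \<star> cl_prod (map f [Suc k..<j])) x y"
    using assms by (intro cl_intertwines_mul[OF cl_intertwines_prod_commute]) auto
  moreover have "cl_intertwines (cl_prod (map f [i..<k])) y y"
    using assms by (intro cl_intertwines_prod_commute) auto
  ultimately show ?thesis
    by (simp add: cl_prod_append cl_intertwines_mul)
qed

section \<open>The spin group\<close>

lemma cl_prod_mul_rev:
  assumes "\<And>u. u \<in> set us \<Longrightarrow> u \<star> u = - (cl_one :: 'n::{finite,linorder} cl)"
  shows "cl_prod us \<star> cl_prod (rev us) = (-1) ^ length us *s cl_one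
       \<and> cl_prod (rev us) \<star> cl_prod us = (-1) ^ length us *s cl_one"
  using assms
proof (induction us)
  case Nil
  then show ?case by (simp add: vec_eq_iff)
next
  case (Cons u us)
  let ?c = "(-1::complex) ^ length us"
  have uu: "u \<star> u = - cl_one" using Cons.prems by simp
  have IH: "cl_prod us \<star> cl_prod (rev us) = ?c *s cl_one" "cl_prod (rev us) \<star> cl_prod us = ?c *s cl_one"
    using Cons by auto
  have "cl_prod (u # us) \<star> cl_prod (rev (u # us)) = u \<star> (cl_prod us \<star> cl_prod (rev us)) \<star> u"
    by (simp add: cl_prod_append cl_mul_assoc)
  also have "\<dots> = ?c *s (u \<star> u)" by (simp add: IH cl_mul_smult_left cl_mul_smult_right)
  finally have "cl_prod (u # us) \<star> cl_prod (rev (u # us)) = (-1) ^ length (u # us) *s cl_one"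
    by (simp add: uu vec_eq_iff)
  moreover have "cl_prod (rev (u # us)) \<star> cl_prod (u # us) = cl_prod (rev us) \<star> (u \<star> u) \<star> cl_prod us"
    by (simp add: cl_prod_append cl_mul_assoc)
  then have "cl_prod (rev (u # us)) \<star> cl_prod (u # us) = (-1) ^ length (u # us) *s cl_one"
    by (simp add: uu IH cl_mul_minus_left cl_mul_minus_right vec_eq_iff)
  ultimately show ?case by simp
qed

lemma cl_prod_sandwich_vector:
  assumes "\<And>u. u \<in> set us \<Longrightarrow> is_cl_vector u" "is_cl_vector v"
  shows "is_cl_vector (cl_prod us \<star> v \<star> cl_prod (rev us) :: 'n::{finite,linorder} cl)"
  using assms(1)
proof (induction us)
  case Nil
  then show ?case using assms(2) by simp
next
  case (Cons u us)
  have "cl_prod (u # us) \<star> v \<star> cl_prod (rev (u # us)) = u \<star> (cl_prod us \<star> v \<star> cl_prod (rev us)) \<star> u"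
    by (simp add: cl_prod_append cl_mul_assoc)
  then show ?case using Cons cl_vector_reflection by auto
qed

lemma spin_group_elim:
  assumes "s \<in> (spin_group :: 'n::{finite,linorder} cl set)"
  obtains us where "s = cl_prod us" "cl_unit s" "cl_inv s = cl_prod (rev us)"
    "\<And>u. u \<in> set us \<Longrightarrow> is_cl_vector u \<and> is_cl_real u"
proof -
  obtain ws where s: "s = cl_prod (map cl_vec ws)" and ev: "even (length ws)"
    and unit: "\<forall>w\<in>set ws. norm w = 1"
    using assms unfolding spin_group_def by blast
  define us where "us = map cl_vec ws"
  have "u \<star> u = - cl_one" if "u \<in> set us" for u
    using that unit by (auto simp: us_def cl_vec_sq vec_eq_iff)
  then have "s \<star> cl_prod (rev us) = cl_one" "cl_prod (rev us) \<star> s = cl_one"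
    using cl_prod_mul_rev[of us] ev unfolding s us_def[symmetric] by (auto simp: us_def vec_eq_iff)
  then show ?thesis
    by (intro that[of us]) (auto simp: s us_def intro: cl_unitI cl_inv_unique is_cl_vector_cl_vec is_cl_real_cl_vec)
qed

lemma spin_group_conj_vector:
  assumes "s \<in> spin_group" "is_cl_vector v"
  shows "is_cl_vector (cl_conj s v)"
proof -
  obtain us where "s = cl_prod us" "cl_inv s = cl_prod (rev us)" "\<And>u. u \<in> set us \<Longrightarrow> is_cl_vector u"
    using spin_group_elim[OF assms(1)] by metis
  then show ?thesis
    by (simp add: cl_conj_def cl_prod_sandwich_vector assms(2))
qed

lemma spin_group_real:
  assumes "s \<in> spin_group"
  shows "is_cl_real s" "is_cl_real (cl_inv s)"
proof -
  obtain us where "s = cl_prod us" "cl_inv s = cl_prod (rev us)" "\<And>u. u \<in> set us \<Longrightarrow> is_cl_real u"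
    using spin_group_elim[OF assms(1)] by metis
  then show "is_cl_real s" "is_cl_real (cl_inv s)"
    by (auto intro: is_cl_real_prod)
qed

lemma spin_group_unit: "s \<in> spin_group \<Longrightarrow> cl_unit s"
  by (erule spin_group_elim)

text \<open>The scalar part is a trace: it is symmetric in the two factors, and the vector components
  are read off by it. Hence the matrix of the sandwich map \<open>x \<mapsto> t \<star> x \<star> s\<close> is the
  transpose of that of \<open>x \<mapsto> s \<star> x \<star> t\<close>, for arbitrary \<open>s\<close> and \<open>t\<close>.\<close>

lemma cl_mul_scalar_part_commute: "(x \<star> y) $ {} = (y \<star> x) $ {}"
  by (simp add: cl_mul_component mult.commute mult.left_commute)

lemma cl_singleton_component_eq_scalar_part: "x $ {i} = - (x \<star> cl_blade {i}) $ {}"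
proof -
  have "(x \<star> cl_blade {i}) $ {} = (\<Sum>A\<in>UNIV. if A = {i} then cl_sign {i} {i} * x $ {i} else 0)"
    unfolding cl_mul_component by (rule sum.cong) (auto simp: cl_blade_component)
  moreover have "inversions {i} {i} = {}"
    by (auto simp: inversions_def)
  ultimately show ?thesis by (simp add: cl_sign_eq_parity parity_def)
qed

lemma cl_sandwich_transpose:
  "(t \<star> cl_blade {j} \<star> s) $ {i} = (s \<star> cl_blade {i} \<star> t) $ {j :: 'n::{finite,linorder}}"
proof -
  have "(t \<star> cl_blade {j} \<star> s) $ {i} = - (t \<star> (cl_blade {j} \<star> s \<star> cl_blade {i})) $ {}"
    by (simp add: cl_singleton_component_eq_scalar_part[of _ i] cl_mul_assoc)
  also have "\<dots> = - (cl_blade {j} \<star> (s \<star> cl_blade {i} \<star> t)) $ {}"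
    by (simp add: cl_mul_scalar_part_commute[of t] cl_mul_assoc)
  also have "\<dots> = (s \<star> cl_blade {i} \<star> t) $ {j}"
    by (simp add: cl_singleton_component_eq_scalar_part[of _ j] cl_mul_scalar_part_commute[of "cl_blade {j}"])
  finally show ?thesis .
qed

section \<open>Rotors in the generators\<close>

definition cl_rotor :: "'n::{finite,linorder} cl \<Rightarrow> 'n cl \<Rightarrow> 'n cl" where
  "cl_rotor u v = cl_one + u \<star> v"

text \<open>For anticommuting square roots \<open>u\<close>, \<open>v\<close> of \<open>-1\<close>, the element \<open>1 + u v\<close> is
  (up to the factor \<open>\<surd>2\<close>) the spin lift of the quarter turn \<open>u \<mapsto> v \<mapsto> -u\<close>.\<close>

locale anticommuting_pair =
  fixes u v :: "'n::{finite,linorder} cl"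
  assumes u_sq: "u \<star> u = - cl_one" and v_sq: "v \<star> v = - cl_one"
    and anticommute: "u \<star> v = - (v \<star> u)"
begin

lemma rotor_intertwines:
  shows "cl_intertwines (cl_rotor u v) u v" "cl_intertwines (cl_rotor u v) v (- u)"
proof -
  have vu: "v \<star> u = - (u \<star> v)"
    using anticommute by simp
  have "u \<star> v \<star> u = v"
    by (simp add: cl_mul_assoc vu cl_mul_minus_right) (simp add: cl_mul_assoc[symmetric] u_sq cl_mul_minus_left)
  moreover have "v \<star> u \<star> v = u"
    by (simp add: vu cl_mul_minus_left cl_mul_assoc v_sq cl_mul_minus_right)
  moreover have "u \<star> (u \<star> z) = - z" "v \<star> (v \<star> z) = - z" for z
    by (simp_all add: cl_mul_assoc[symmetric] u_sq v_sq cl_mul_minus_left)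
  ultimately show "cl_intertwines (cl_rotor u v) u v" "cl_intertwines (cl_rotor u v) v (- u)"
    by (simp_all add: cl_intertwines_def cl_rotor_def cl_mul_linear_simps cl_mul_assoc v_sq
        cl_mul_minus_right add.commute)
qed

lemma rotor_commutes:
  assumes "u \<star> w = - (w \<star> u)" "v \<star> w = - (w \<star> v)"
  shows "cl_intertwines (cl_rotor u v) w w"
proof -
  have "u \<star> v \<star> w = w \<star> (u \<star> v)"
    by (simp add: cl_mul_assoc assms(2) cl_mul_minus_right)
       (simp add: cl_mul_assoc[symmetric] assms(1) cl_mul_minus_left)
  then show ?thesis
    by (simp add: cl_intertwines_def cl_rotor_def cl_mul_add_left cl_mul_add_right)
qed

lemma rotor_unit: "cl_unit (cl_rotor u v)"
proof -
  have "u \<star> v \<star> (u \<star> v) = - cl_one"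
    by (simp add: cl_mul_assoc) (simp add: cl_mul_assoc[symmetric] anticommute u_sq v_sq cl_mul_minus_left cl_mul_minus_right)
  then show ?thesis unfolding cl_rotor_def by (rule cl_unit_one_plus)
qed

end

section \<open>The elements \<open>s_I\<close> and \<open>s_J\<close>\<close>

lemma cl_gen_sq: "cl_gen a \<star> cl_gen a = - (cl_one :: 'n::{finite,linorder} cl)"
  by (simp add: cl_gen_def cl_blade_singleton_sq)

definition s_I_factor :: "nat \<Rightarrow> 'n::{finite,linorder} cl" where
  "s_I_factor k = complex_of_real (sqrt 2 / 2) *s cl_rotor (cl_gen (2*k-1)) (cl_gen (2*k))"

definition s_J_factor :: "nat \<Rightarrow> 'n::{finite,linorder} cl" where
  "s_J_factor j = (1/2) *s (cl_rotor (cl_gen (4*j-3)) (cl_gen (4*j-1)) \<star> cl_rotor (cl_gen (4*j)) (cl_gen (4*j-2)))"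

context
  fixes p :: nat
  assumes card: "CARD('n::{finite,linorder}) = 4 * p"
begin

lemma ix_bij: "bij_betw (ix :: nat \<Rightarrow> 'n) {1..4*p} UNIV"
proof -
  let ?L = "sorted_list_of_set (UNIV :: 'n set)"
  have "bij_betw (\<lambda>k. ?L ! k) {..<4*p} UNIV"
    using card bij_betw_nth[of ?L "{..<4*p}" UNIV] by (simp add: length_sorted_list_of_set)
  moreover have "bij_betw (\<lambda>a. a - 1) {1..4*p} {..<4*p}"
    by (rule bij_betw_byWitness[where f' = Suc]) auto
  ultimately show ?thesis
    unfolding ix_def by (rule bij_betw_trans[unfolded comp_def, rotated])
qed

lemma sum_UNIV_ix: "(\<Sum>i\<in>UNIV. f (i::'n)) = (\<Sum>a=1..4*p. f (ix a))"
  using sum.reindex_bij_betw[OF ix_bij, of f] by simp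

lemma cl_gen_anticommute:
  assumes "a \<in> {1..4*p}" "b \<in> {1..4*p}" "a \<noteq> b"
  shows "cl_gen a \<star> cl_gen b = - (cl_gen b \<star> cl_gen a :: 'n cl)"
proof -
  have "(ix a :: 'n) \<noteq> ix b"
    using bij_betw_imp_inj_on[OF ix_bij] assms by (auto dest: inj_onD)
  then show ?thesis unfolding cl_gen_def by (rule cl_blade_singleton_anticommute)
qed

lemma anticommuting_pair_gen:
  "a \<in> {1..4*p} \<Longrightarrow> b \<in> {1..4*p} \<Longrightarrow> a \<noteq> b \<Longrightarrow> anticommuting_pair (cl_gen a :: 'n cl) (cl_gen b)"
  using cl_gen_anticommute[of a b] by unfold_locales (simp_all add: cl_gen_sq)

lemma gen_rotor_commutes:
  assumes "a \<in> {1..4*p}" "b \<in> {1..4*p}" "c \<in> {1..4*p}" "a \<noteq> b" "c \<noteq> a" "c \<noteq> b"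
  shows "cl_intertwines (cl_rotor (cl_gen a) (cl_gen b) :: 'n cl) (cl_gen c) (cl_gen c)"
    "cl_intertwines (cl_rotor (cl_gen a) (cl_gen b) :: 'n cl) (- cl_gen c) (- cl_gen c)"
proof -
  show "cl_intertwines (cl_rotor (cl_gen a) (cl_gen b) :: 'n cl) (cl_gen c) (cl_gen c)"
    using assms by (intro anticommuting_pair.rotor_commutes anticommuting_pair_gen cl_gen_anticommute) auto
  then show "cl_intertwines (cl_rotor (cl_gen a) (cl_gen b) :: 'n cl) (- cl_gen c) (- cl_gen c)"
    by (rule cl_intertwines_uminus)
qed

lemma s_I_factorization: "(s_I p :: 'n cl) = cl_prod (map s_I_factor [1..<2*p+1])"
  unfolding s_I_def s_I_factor_def[abs_def] cl_rotor_def ..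

lemma s_J_factorization: "(s_J p :: 'n cl) = cl_prod (map s_J_factor [1..<p+1])"
proof -
  have "cl_gen (4*j-2) \<star> cl_gen (4*j) = - (cl_gen (4*j) \<star> cl_gen (4*j-2) :: 'n cl)"
    if "j \<in> set [1..<p+1]" for j
    using that by (intro cl_gen_anticommute) auto
  then show ?thesis
    unfolding s_J_def
    by (intro arg_cong[where f = cl_prod] map_cong)
       (simp_all only: s_J_factor_def cl_rotor_def cl_mul_smult_left diff_minus_eq_add)
qed

lemma s_I_unit: "cl_unit (s_I p :: 'n cl)"
  unfolding s_I_factorization s_I_factor_def
  by (rule cl_unit_prod) (auto intro!: cl_unit_smult anticommuting_pair.rotor_unit anticommuting_pair_gen)

lemma s_J_unit: "cl_unit (s_J p :: 'n cl)"
  unfolding s_J_factorization s_J_factor_def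
  by (rule cl_unit_prod) (auto intro!: cl_unit_smult cl_unit_mul anticommuting_pair.rotor_unit anticommuting_pair_gen)

lemma s_I_factor_commutes:
  assumes "k \<in> {1..2*p}" "c \<in> {1..4*p}" "c \<noteq> 2*k-1" "c \<noteq> 2*k"
  shows "cl_intertwines (s_I_factor k :: 'n cl) (cl_gen c) (cl_gen c)"
    "cl_intertwines (s_I_factor k :: 'n cl) (- cl_gen c) (- cl_gen c)"
  using assms unfolding s_I_factor_def by (auto intro!: cl_intertwines_smult gen_rotor_commutes)

lemma s_J_factor_commutes:
  assumes "j \<in> {1..p}" "c \<in> {1..4*p}" "c \<notin> {4*j-3..4*j}"
  shows "cl_intertwines (s_J_factor j :: 'n cl) (cl_gen c) (cl_gen c)"
    "cl_intertwines (s_J_factor j :: 'n cl) (- cl_gen c) (- cl_gen c)"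
  using assms unfolding s_J_factor_def
  by (auto intro!: cl_intertwines_smult cl_intertwines_mul[of _ "cl_gen c" "cl_gen c" _ "cl_gen c"]
      cl_intertwines_mul[of _ "- cl_gen c" "- cl_gen c" _ "- cl_gen c"] gen_rotor_commutes)

lemma s_I_factor_intertwines:
  assumes "k \<in> {1..2*p}"
  shows "cl_intertwines (s_I_factor k :: 'n cl) (cl_gen (2*k-1)) (cl_gen (2*k))"
    "cl_intertwines (s_I_factor k :: 'n cl) (cl_gen (2*k)) (- cl_gen (2*k-1))"
proof -
  have "anticommuting_pair (cl_gen (2*k-1)) (cl_gen (2*k) :: 'n cl)"
    using assms by (intro anticommuting_pair_gen) auto
  from anticommuting_pair.rotor_intertwines[OF this]
  show "cl_intertwines (s_I_factor k :: 'n cl) (cl_gen (2*k-1)) (cl_gen (2*k))"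
    "cl_intertwines (s_I_factor k :: 'n cl) (cl_gen (2*k)) (- cl_gen (2*k-1))"
    unfolding s_I_factor_def by (auto intro: cl_intertwines_smult)
qed

lemma s_J_factor_intertwines:
  assumes "j \<in> {1..p}"
  shows "cl_intertwines (s_J_factor j :: 'n cl) (cl_gen (4*j-3)) (cl_gen (4*j-1))"
    "cl_intertwines (s_J_factor j :: 'n cl) (cl_gen (4*j-1)) (- cl_gen (4*j-3))"
    "cl_intertwines (s_J_factor j :: 'n cl) (cl_gen (4*j)) (cl_gen (4*j-2))"
    "cl_intertwines (s_J_factor j :: 'n cl) (cl_gen (4*j-2)) (- cl_gen (4*j))"
proof -
  let ?A = "cl_rotor (cl_gen (4*j-3)) (cl_gen (4*j-1)) :: 'n cl"
  let ?B = "cl_rotor (cl_gen (4*j)) (cl_gen (4*j-2)) :: 'n cl"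
  have "anticommuting_pair (cl_gen (4*j-3)) (cl_gen (4*j-1) :: 'n cl)"
    "anticommuting_pair (cl_gen (4*j)) (cl_gen (4*j-2) :: 'n cl)"
    using assms by (intro anticommuting_pair_gen; auto)+
  note A = anticommuting_pair.rotor_intertwines[OF this(1)]
    and B = anticommuting_pair.rotor_intertwines[OF this(2)]
  have "cl_intertwines ?B (cl_gen (4*j-3)) (cl_gen (4*j-3))" "cl_intertwines ?B (cl_gen (4*j-1)) (cl_gen (4*j-1))"
    "cl_intertwines ?A (cl_gen (4*j-2)) (cl_gen (4*j-2))" "cl_intertwines ?A (- cl_gen (4*j)) (- cl_gen (4*j))"
    using assms by (auto intro!: gen_rotor_commutes)
  note commutes = this
  show "cl_intertwines (s_J_factor j :: 'n cl) (cl_gen (4*j-3)) (cl_gen (4*j-1))"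
    unfolding s_J_factor_def by (intro cl_intertwines_smult cl_intertwines_mul[OF commutes(1) A(1)])
  show "cl_intertwines (s_J_factor j :: 'n cl) (cl_gen (4*j-1)) (- cl_gen (4*j-3))"
    unfolding s_J_factor_def by (intro cl_intertwines_smult cl_intertwines_mul[OF commutes(2) A(2)])
  show "cl_intertwines (s_J_factor j :: 'n cl) (cl_gen (4*j)) (cl_gen (4*j-2))"
    unfolding s_J_factor_def by (intro cl_intertwines_smult cl_intertwines_mul[OF B(1) commutes(3)])
  show "cl_intertwines (s_J_factor j :: 'n cl) (cl_gen (4*j-2)) (- cl_gen (4*j))"
    unfolding s_J_factor_def by (intro cl_intertwines_smult cl_intertwines_mul[OF B(2) commutes(4)])
qed

lemma cl_conj_s_I:
  assumes "k \<in> {1..2*p}"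
  shows "cl_conj (s_I p) (cl_gen (2*k-1)) = (cl_gen (2*k) :: 'n cl)"
    "cl_conj (s_I p) (cl_gen (2*k)) = - (cl_gen (2*k-1) :: 'n cl)"
proof -
  define Q :: "'n cl set" where "Q = {cl_gen (2*k-1), cl_gen (2*k), - cl_gen (2*k-1)}"
  have "cl_intertwines (s_I p) x y" if "cl_intertwines (s_I_factor k) x y" "x \<in> Q" "y \<in> Q" for x y
    unfolding s_I_factorization
  proof (rule cl_intertwines_prod_factor[of 1 k])
    fix m assume "1 \<le> m" "m < 2*p+1" "m \<noteq> k"
    then have "cl_intertwines (s_I_factor m) w w" if "w \<in> Q" for w
      using that assms unfolding Q_def by (auto intro!: s_I_factor_commutes)
    then show "cl_intertwines (s_I_factor m) x x \<and> cl_intertwines (s_I_factor m) y y"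
      using that(2,3) by blast
  qed (use assms that in auto)
  then show "cl_conj (s_I p) (cl_gen (2*k-1)) = (cl_gen (2*k) :: 'n cl)"
    "cl_conj (s_I p) (cl_gen (2*k)) = - (cl_gen (2*k-1) :: 'n cl)"
    using s_I_factor_intertwines[OF assms] by (auto simp: Q_def intro!: cl_conj_eqI s_I_unit)
qed

lemma cl_conj_s_J:
  assumes "j \<in> {1..p}"
  shows "cl_conj (s_J p) (cl_gen (4*j-3)) = (cl_gen (4*j-1) :: 'n cl)"
    "cl_conj (s_J p) (cl_gen (4*j-1)) = - (cl_gen (4*j-3) :: 'n cl)"
    "cl_conj (s_J p) (cl_gen (4*j)) = (cl_gen (4*j-2) :: 'n cl)"
    "cl_conj (s_J p) (cl_gen (4*j-2)) = - (cl_gen (4*j) :: 'n cl)"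
proof -
  define Q :: "'n cl set" where "Q = (\<Union>c\<in>{4*j-3, 4*j-2, 4*j-1, 4*j}. {cl_gen c, - cl_gen c})"
  have in_s_J: "cl_intertwines (s_J p) x y" if "cl_intertwines (s_J_factor j) x y" "x \<in> Q" "y \<in> Q" for x y
    unfolding s_J_factorization
  proof (rule cl_intertwines_prod_factor[of 1 j])
    fix m assume "1 \<le> m" "m < p+1" "m \<noteq> j"
    then have "cl_intertwines (s_J_factor m) w w" if "w \<in> Q" for w
      using that assms unfolding Q_def by (auto intro!: s_J_factor_commutes)
    then show "cl_intertwines (s_J_factor m) x x \<and> cl_intertwines (s_J_factor m) y y"
      using that(2,3) by blast
  qed (use assms that in auto)
  then show "cl_conj (s_J p) (cl_gen (4*j-3)) = (cl_gen (4*j-1) :: 'n cl)"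
    "cl_conj (s_J p) (cl_gen (4*j-1)) = - (cl_gen (4*j-3) :: 'n cl)"
    "cl_conj (s_J p) (cl_gen (4*j)) = (cl_gen (4*j-2) :: 'n cl)"
    "cl_conj (s_J p) (cl_gen (4*j-2)) = - (cl_gen (4*j) :: 'n cl)"
    by (intro cl_conj_eqI s_J_unit in_s_J s_J_factor_intertwines[OF assms]; simp add: Q_def)+
qed

end

section \<open>The chain rule for the \<open>L\<close>-action\<close>

lemma cl_vec_add: "cl_vec (X + Y) = cl_vec X + (cl_vec Y :: 'n::finite cl)"
  by (simp add: vec_eq_iff cl_vec_component)

lemma cl_vec_scaleR: "cl_vec (r *\<^sub>R X) = r *\<^sub>R (cl_vec X :: 'n::finite cl)"
proof -
  have "r *\<^sub>R z = complex_of_real r * z" for z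
    by (simp add: scaleR_conv_of_real)
  then have "cl_vec (r *\<^sub>R X) $ A = (r *\<^sub>R (cl_vec X :: 'n cl)) $ A" for A
    unfolding vector_scaleR_component by (simp add: cl_vec_component vector_scaleR_component)
  then show ?thesis by (simp add: vec_eq_iff)
qed

lemma cl_vec_axis: "cl_vec (axis i 1) = (cl_blade {i} :: 'n::finite cl)"
proof -
  have "cl_vec (axis i 1) $ A = cl_blade {i} $ A" for A :: "'n set"
  proof (cases "card A = 1")
    case True
    then obtain a where "A = {a}" by (rule card_1_singletonE)
    then show ?thesis by (auto simp: cl_blade_component axis_def)
  next
    case False
    then have "A \<noteq> {i}" by auto
    then show ?thesis using False by (simp add: cl_vec_component cl_blade_component)
  qed
  then show ?thesis by (simp add: vec_eq_iff)
qed

lemma linear_cl_unvec: "linear (cl_unvec :: 'n::finite cl \<Rightarrow> _)"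
  by (rule linearI) (simp_all add: cl_unvec_def vec_eq_iff)

lemma linear_cl_sandwich: "linear (\<lambda>X. cl_unvec (t \<star> cl_vec X \<star> (s :: 'n::{finite,linorder} cl)))"
  by (rule linearI)
     (simp_all add: cl_vec_add cl_vec_scaleR cl_mul_add_right cl_mul_add_left cl_mul_scaleR_right
       cl_mul_scaleR_left linear_add[OF linear_cl_unvec] linear_scale[OF linear_cl_unvec])

lemma linear_vec_expansion:
  assumes "linear (f :: (real, 'n::finite) vec \<Rightarrow> 'b::real_vector)"
  shows "f Y = (\<Sum>i\<in>UNIV. Y $ i *\<^sub>R f (axis i 1))"
proof -
  have "f Y = f (\<Sum>i\<in>UNIV. Y $ i *\<^sub>R axis i 1)"
    using basis_expansion[of Y] by (simp add: scalar_mult_eq_scaleR)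
  then show ?thesis
    using assms by (simp add: linear_sum linear_scale)
qed

lemma pd_Lact:
  fixes s :: "'n::{finite,linorder} cl" and F :: "(real, 'n) vec \<Rightarrow> 'n cl"
  assumes card: "CARD('n) = 4 * p" and diff: "\<forall>X. F differentiable (at X)"
  shows "pd a (Lact s F) X = (\<Sum>b=1..4*p. Re ((cl_inv s \<star> cl_gen a \<star> s) $ {ix b}) *\<^sub>R
            (s \<star> pd b F (cl_unvec (cl_inv s \<star> cl_vec X \<star> s))))"
proof -
  define R where "R = (\<lambda>X. cl_unvec (cl_inv s \<star> cl_vec X \<star> s))"
  define F' where "F' = frechet_derivative F (at (R X))"
  have "bounded_linear R"
    unfolding R_def using linear_cl_sandwich linear_conv_bounded_linear by blast
  then have dR: "(R has_derivative R) (at X)"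
    by (rule bounded_linear_imp_has_derivative)
  have dF: "(F has_derivative F') (at (R X))"
    unfolding F'_def using diff frechet_derivative_works by blast
  have "bounded_linear (\<lambda>y. s \<star> y)"
    using linear_cl_mul_left linear_conv_bounded_linear by blast
  then have dL: "((\<lambda>y. s \<star> y) has_derivative (\<lambda>y. s \<star> y)) (at (F (R X)))"
    by (rule bounded_linear_imp_has_derivative)
  have "Lact s F = (\<lambda>y. s \<star> y) \<circ> (F \<circ> R)"
    by (simp add: fun_eq_iff Lact_def R_def)
  moreover have "(((\<lambda>y. s \<star> y) \<circ> (F \<circ> R)) has_derivative ((\<lambda>y. s \<star> y) \<circ> (F' \<circ> R))) (at X)"
    using diff_chain_at[OF diff_chain_at[OF dR dF]] dL by (simp add: diff_chain_at)
  ultimately have "frechet_derivative (Lact s F) (at X) = (\<lambda>y. s \<star> y) \<circ> (F' \<circ> R)"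
    using frechet_derivative_at by metis
  then have "pd a (Lact s F) X = s \<star> F' (R (axis (ix a) 1))"
    by (simp add: pd_def)
  also have "\<dots> = (\<Sum>i\<in>UNIV. R (axis (ix a) 1) $ i *\<^sub>R (s \<star> F' (axis i 1)))"
    using linear_vec_expansion[OF has_derivative_linear[OF dF], of "R (axis (ix a) 1)"]
    by (simp add: cl_mul_sum_right cl_mul_scaleR_right)
  also have "\<dots> = (\<Sum>b=1..4*p. R (axis (ix a) 1) $ ix b *\<^sub>R (s \<star> F' (axis (ix b) 1)))"
    by (rule sum_UNIV_ix[OF card])
  finally show ?thesis
    by (simp add: R_def F'_def pd_def cl_vec_axis cl_gen_def cl_unvec_def)
qed

section \<open>Invariance of first-order operators\<close>

context
  fixes p :: nat
  assumes card: "CARD('n::{finite,linorder}) = 4 * p"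
begin

lemma real_cl_vector_expansion:
  assumes "is_cl_vector w" "is_cl_real (w :: 'n cl)"
  shows "w = (\<Sum>m=1..4*p. Re (w $ {ix m}) *\<^sub>R cl_gen m)"
proof -
  have "w = (\<Sum>i\<in>UNIV. w $ {i} *s cl_blade {i})"
    by (rule is_cl_vector_expansion[OF assms(1)])
  also have "\<dots> = (\<Sum>i\<in>UNIV. Re (w $ {i}) *\<^sub>R cl_blade {i})"
  proof (rule sum.cong[OF refl])
    fix i
    have "w $ {i} = complex_of_real (Re (w $ {i}))"
      using assms(2) unfolding is_cl_real_def by (simp add: complex_eq_iff)
    then show "w $ {i} *s cl_blade {i} = Re (w $ {i}) *\<^sub>R cl_blade {i}"
      by (simp add: scaleR_cl_eq_smult)
  qed
  also have "\<dots> = (\<Sum>m=1..4*p. Re (w $ {ix m}) *\<^sub>R cl_gen m)"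
    unfolding cl_gen_def by (rule sum_UNIV_ix[OF card])
  finally show ?thesis .
qed

lemma Lact_commute:
  fixes C :: "'n cl \<Rightarrow> 'n cl" and Op :: "((real, 'n) vec \<Rightarrow> 'n cl) \<Rightarrow> (real, 'n) vec \<Rightarrow> 'n cl"
  assumes Op: "\<And>G X. Op G X = (\<Sum>m=1..4*p. C (cl_gen m) \<star> pd m G X)"
    and C: "linear C" "\<And>x. C (cl_conj s x) = cl_conj s (C x)"
    and s: "s \<in> spin_group"
    and diff: "\<forall>X. F differentiable (at X)"
  shows "Op (Lact s F) = Lact s (Op F)"
proof
  fix X
  define Y where "Y = cl_unvec (cl_inv s \<star> cl_vec X \<star> s)"
  define w where "w b = cl_conj s (cl_gen b)" for b
  have transpose: "Re ((cl_inv s \<star> cl_gen m \<star> s) $ {ix b}) = Re (w b $ {ix m})" for m b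
    unfolding w_def cl_conj_def cl_gen_def by (simp add: cl_sandwich_transpose)
  have "is_cl_vector (w b)" for b
    unfolding w_def cl_gen_def by (intro spin_group_conj_vector s is_cl_vector_blade)
  moreover have "is_cl_real (w b)" for b
    using spin_group_real[OF s] unfolding w_def cl_conj_def
    by (intro is_cl_real_mul) (simp_all add: is_cl_real_def cl_gen_def cl_blade_component)
  ultimately have w_expansion: "w b = (\<Sum>m=1..4*p. Re (w b $ {ix m}) *\<^sub>R cl_gen m)" for b
    by (intro real_cl_vector_expansion)
  have equivariant: "C (w b) \<star> s = s \<star> C (cl_gen b)" for b
    using spin_group_unit[OF s] unfolding w_def C(2) by (simp add: cl_conj_def cl_mul_assoc cl_unit_inv)
  have "Op (Lact s F) X = (\<Sum>m=1..4*p. C (cl_gen m) \<star> (\<Sum>b=1..4*p. Re (w b $ {ix m}) *\<^sub>R (s \<star> pd b F Y)))"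
    unfolding Op Y_def by (simp add: pd_Lact[OF card diff] transpose)
  also have "\<dots> = (\<Sum>b=1..4*p. \<Sum>m=1..4*p. (Re (w b $ {ix m}) *\<^sub>R C (cl_gen m)) \<star> s \<star> pd b F Y)"
    by (subst sum.swap) (simp add: cl_mul_sum_right cl_mul_scaleR_right cl_mul_scaleR_left cl_mul_assoc)
  also have "\<dots> = (\<Sum>b=1..4*p. C (w b) \<star> s \<star> pd b F Y)"
    by (subst (2) w_expansion) (simp add: linear_sum[OF C(1)] linear_scale[OF C(1)] cl_mul_sum_left)
  also have "\<dots> = s \<star> Op F Y"
    unfolding Op by (simp add: equivariant cl_mul_sum_right cl_mul_assoc)
  finally show "Op (Lact s F) X = Lact s (Op F) X"
    by (simp add: Lact_def Y_def)
qed

end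

section \<open>The four operators\<close>

text \<open>The combination \<open>a + b \<bbbI> + c \<bbbJ> + d \<bbbI>\<bbbJ>\<close>, with the complex structures \<open>\<bbbI>\<close> and
  \<open>\<bbbJ>\<close> realised on vectors by conjugation with \<open>s_I\<close> and \<open>s_J\<close>.\<close>

definition quat_map :: "nat \<Rightarrow> complex \<Rightarrow> complex \<Rightarrow> complex \<Rightarrow> complex \<Rightarrow> 'n::{finite,linorder} cl \<Rightarrow> 'n cl" where
  "quat_map p a b c d x = a *s x + b *s cl_conj (s_I p) x + c *s cl_conj (s_J p) x + d *s cl_conj (s_I p \<star> s_J p) x"

lemma linear_quat_map: "linear (quat_map p a b c d)"
  by (rule linearI)
     (simp_all add: quat_map_def cl_conj_add cl_conj_smult scaleR_cl_eq_smult vec_eq_iff algebra_simps)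

lemma sum_pairs: "(\<Sum>k=1..2*(q::nat). g k) = (\<Sum>j=1..q. g (2*j-1) + g (2*j) :: 'a::comm_monoid_add)"
  by (induction q) (simp_all add: add.assoc)

lemma sum_quadruples:
  "(\<Sum>k=1..4*(q::nat). g k) = (\<Sum>j=1..q. (g (4*j-3) + g (4*j-2)) + (g (4*j-1) + g (4*j)) :: 'a::comm_monoid_add)"
proof -
  have "(\<Sum>k=1..4*q. g k) = (\<Sum>i=1..2*q. g (2*i-1) + g (2*i))"
    using sum_pairs[of g "2*q"] by (simp add: mult.assoc)
  also have "\<dots> = (\<Sum>j=1..q. (g (4*j-3) + g (4*j-2)) + (g (4*j-1) + g (4*j)))"
    by (subst sum_pairs) (intro sum.cong refl, simp add: algebra_simps numeral_eq_Suc)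
  finally show ?thesis .
qed

context
  fixes p :: nat
  assumes card: "CARD('n::{finite,linorder}) = 4 * p"
begin

lemma quat_map_equivariant:
  assumes "s \<in> spinQ p"
  shows "quat_map p a b c d (cl_conj s x) = cl_conj s (quat_map p a b c d (x :: 'n cl))"
proof -
  have s: "cl_unit s" "s_I p \<star> s = s \<star> s_I p" "s_J p \<star> s = s \<star> s_J p"
    using assms spin_group_unit unfolding spinQ_def by auto
  then have "s_I p \<star> s_J p \<star> s = s \<star> (s_I p \<star> s_J p)"
    by (simp add: cl_mul_assoc) (simp add: cl_mul_assoc[symmetric])
  with s s_I_unit[OF card] s_J_unit[OF card] show ?thesis
    by (simp add: quat_map_def cl_conj_add cl_conj_smult cl_conj_commute[of "s_I p" s]
        cl_conj_commute[of "s_J p" s] cl_conj_commute[of "s_I p \<star> s_J p" s] cl_unit_mul)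
qed

lemma cl_conj_s_I_quadruple:
  assumes "j \<in> {1..p}"
  shows "cl_conj (s_I p) (cl_gen (4*j-3)) = (cl_gen (4*j-2) :: 'n cl)"
    "cl_conj (s_I p) (cl_gen (4*j-2)) = - (cl_gen (4*j-3) :: 'n cl)"
    "cl_conj (s_I p) (cl_gen (4*j-1)) = (cl_gen (4*j) :: 'n cl)"
    "cl_conj (s_I p) (cl_gen (4*j)) = - (cl_gen (4*j-1) :: 'n cl)"
proof -
  have "2*j-1 \<in> {1..2*p}" "2*j \<in> {1..2*p}"
    and "2*(2*j-1)-1 = 4*j-3" "2*(2*j-1) = 4*j-2" "2*(2*j)-1 = 4*j-1" "2*(2*j) = 4*j"
    using assms by auto
  with cl_conj_s_I[OF card] show "cl_conj (s_I p) (cl_gen (4*j-3)) = (cl_gen (4*j-2) :: 'n cl)"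
    "cl_conj (s_I p) (cl_gen (4*j-2)) = - (cl_gen (4*j-3) :: 'n cl)"
    "cl_conj (s_I p) (cl_gen (4*j-1)) = (cl_gen (4*j) :: 'n cl)"
    "cl_conj (s_I p) (cl_gen (4*j)) = - (cl_gen (4*j-1) :: 'n cl)"
    by metis+
qed

lemma cl_conj_s_IJ:
  assumes "j \<in> {1..p}"
  shows "cl_conj (s_I p \<star> s_J p) (cl_gen (4*j-3)) = (cl_gen (4*j) :: 'n cl)"
    "cl_conj (s_I p \<star> s_J p) (cl_gen (4*j-2)) = (cl_gen (4*j-1) :: 'n cl)"
    "cl_conj (s_I p \<star> s_J p) (cl_gen (4*j-1)) = - (cl_gen (4*j-2) :: 'n cl)"
    "cl_conj (s_I p \<star> s_J p) (cl_gen (4*j)) = - (cl_gen (4*j-3) :: 'n cl)"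
  using cl_conj_s_J[OF card assms] cl_conj_s_I_quadruple[OF assms]
  by (simp_all add: cl_conj_mul s_I_unit[OF card] s_J_unit[OF card] cl_conj_minus)

lemma Dz_eq_sum: "Dz p G X = (\<Sum>m=1..4*p. quat_map p (1/4) (\<i>/4) 0 0 (cl_gen m) \<star> pd m G X :: 'n cl)"
proof -
  have "witt_fd k \<star> dz k G X = quat_map p (1/4) (\<i>/4) 0 0 (cl_gen (2*k-1)) \<star> pd (2*k-1) G X
      + quat_map p (1/4) (\<i>/4) 0 0 (cl_gen (2*k)) \<star> pd (2*k) G X" if "k \<in> {1..2*p}" for k
    using cl_conj_s_I[OF card that]
    by (simp add: quat_map_def witt_fd_def dz_def cl_mul_linear_simps)
  moreover have "(\<Sum>m=1..4*p. h m) = (\<Sum>k=1..2*p. h (2*k-1) + h (2*k))" for h :: "nat \<Rightarrow> 'n cl"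
    using sum_pairs[of h "2*p"] by (simp add: mult.assoc)
  ultimately show ?thesis
    unfolding Dz_def by (auto intro: sum.cong)
qed

lemma Dz_dag_eq_sum: "Dz_dag p G X = (\<Sum>m=1..4*p. quat_map p (-1/4) (\<i>/4) 0 0 (cl_gen m) \<star> pd m G X :: 'n cl)"
proof -
  have "witt_f k \<star> dzb k G X = quat_map p (-1/4) (\<i>/4) 0 0 (cl_gen (2*k-1)) \<star> pd (2*k-1) G X
      + quat_map p (-1/4) (\<i>/4) 0 0 (cl_gen (2*k)) \<star> pd (2*k) G X" if "k \<in> {1..2*p}" for k
    using cl_conj_s_I[OF card that]
    by (simp add: quat_map_def witt_f_def dzb_def cl_mul_linear_simps)
  moreover have "(\<Sum>m=1..4*p. h m) = (\<Sum>k=1..2*p. h (2*k-1) + h (2*k))" for h :: "nat \<Rightarrow> 'n cl"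
    using sum_pairs[of h "2*p"] by (simp add: mult.assoc)
  ultimately show ?thesis
    unfolding Dz_dag_def by (auto intro: sum.cong)
qed

lemma Dz_J_eq_sum: "Dz_J p G X = (\<Sum>m=1..4*p. quat_map p 0 0 (1/4) (-\<i>/4) (cl_gen m) \<star> pd m G X :: 'n cl)"
proof -
  let ?h = "\<lambda>m. quat_map p 0 0 (1/4) (-\<i>/4) (cl_gen m) \<star> pd m G X :: 'n cl"
  have "witt_f (2*j-1) \<star> dz (2*j) G X - witt_f (2*j) \<star> dz (2*j-1) G X
      = (?h (4*j-3) + ?h (4*j-2)) + (?h (4*j-1) + ?h (4*j))" if "j \<in> {1..p}" for j
  proof -
    have "2*(2*j-1)-1 = 4*j-3" "2*(2*j-1) = 4*j-2" "2*(2*j)-1 = 4*j-1" "2*(2*j) = 4*j"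
      using that by auto
    then show ?thesis
      using cl_conj_s_J[OF card that] cl_conj_s_IJ[OF that]
      by (simp add: quat_map_def witt_f_def dz_def cl_mul_linear_simps)
  qed
  then show ?thesis
    unfolding Dz_J_def sum_quadruples by simp
qed

lemma Dz_dag_J_eq_sum: "Dz_dag_J p G X = (\<Sum>m=1..4*p. quat_map p 0 0 (-1/4) (-\<i>/4) (cl_gen m) \<star> pd m G X :: 'n cl)"
proof -
  let ?h = "\<lambda>m. quat_map p 0 0 (-1/4) (-\<i>/4) (cl_gen m) \<star> pd m G X :: 'n cl"
  have "witt_fd (2*j-1) \<star> dzb (2*j) G X - witt_fd (2*j) \<star> dzb (2*j-1) G X
      = (?h (4*j-3) + ?h (4*j-2)) + (?h (4*j-1) + ?h (4*j))" if "j \<in> {1..p}" for j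
  proof -
    have "2*(2*j-1)-1 = 4*j-3" "2*(2*j-1) = 4*j-2" "2*(2*j)-1 = 4*j-1" "2*(2*j) = 4*j"
      using that by auto
    then show ?thesis
      using cl_conj_s_J[OF card that] cl_conj_s_IJ[OF that]
      by (simp add: quat_map_def witt_fd_def dzb_def cl_mul_linear_simps)
  qed
  then show ?thesis
    unfolding Dz_dag_J_def sum_quadruples by simp
qed

end

theorem proposition3:
  fixes p :: nat and s :: "'n::{finite,linorder} cl" and F :: "(real, 'n) vec \<Rightarrow> 'n cl"
  assumes "CARD('n) = 4 * p"
    and "s \<in> spinQ p"
    and "\<forall>X. F X \<in> spinor_space p"
    and "\<forall>X. F differentiable (at X)"
  shows "Dz p (Lact s F) = Lact s (Dz p F)
       \<and> Dz_dag p (Lact s F) = Lact s (Dz_dag p F)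
       \<and> Dz_J p (Lact s F) = Lact s (Dz_J p F)
       \<and> Dz_dag_J p (Lact s F) = Lact s (Dz_dag_J p F)"
proof -
  have "s \<in> spin_group"
    using assms(2) by (simp add: spinQ_def)
  note invariant = Lact_commute[OF assms(1) _ linear_quat_map quat_map_equivariant[OF assms(1,2)] this assms(4)]
  show ?thesis
    using invariant[OF Dz_eq_sum[OF assms(1)]] invariant[OF Dz_dag_eq_sum[OF assms(1)]]
      invariant[OF Dz_J_eq_sum[OF assms(1)]] invariant[OF Dz_dag_J_eq_sum[OF assms(1)]]
    by blast
qed

end
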